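(* Fix an iteration $t\ge 1$ of importance-sampling-based BoostTransformer, with current aggregated predictor $f_{t-1}$, and let $f^*$ be a minimizer of the risk $\mathcal{R}$. For a probability distribution $P_t=(P_t^1,\dots,P_t^n)$ on $\{1,\dots,n\}$ with all $P_t^i>0$, let the multiset $\mathcal{I}^t=\{i_1,\dots,i_m\}$ ($m\ge 1$) be drawn by sampling $m$ indices independently according to $P_t$, define the importance-weighted functional gradient estimate $$\bar g_t^{\mathcal{I}^t}=\frac{1}{m}\sum_{k=1}^{m}\frac{1}{n\,P_t^{i_k}}\,g_t^{i_k},$$ the update $f_t=f_{t-1}+\alpha_t\,\bar g_t^{\mathcal{I}^t}$ with a fixed step $\alpha_t\in\mathbb{R}$ (not depending on $P_t$), and the expected training progress $$\mathbb{E}_{P_t}\big[\Delta^{(t)}\big]=\|f_{t-1}-f^*\|^2-\mathbb{E}_{P_t}\big[\|f_t-f^*\|^2\,\big|\,\mathcal{F}^{t-1}\big].$$ Then the distribution $$P_t^i=\frac{\|w(x_i,z_i)\|}{\sum_{j=1}^{n}\|w(x_j,z_j)\|},\qquad i=1,\dots,n,$$ maximizes $\mathbb{E}_{P_t}[\Delta^{(t)}]$ over all such distributions $P_t$; that is, the optimal probability of selecting sample $i$ is proportional to the norm of its boosting weight vector.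
   Context: Multiclass boosting setting: training set $\mathcal{D}=\{(x_1,z_1),\dots,(x_n,z_n)\}$ with labels $z_i\in\{1,\dots,M\}$; predictors $f:\mathcal{X}\to\mathbb{R}^M$ with components $f_k$. The loss is $L(z,f(x))=\sum_{j\ne z}e^{\frac12[f_z(x)-f_j(x)]}$ and the risk is $\mathcal{R}[f]=\frac{1}{n}\sum_{i=1}^n L(z_i,f(x_i))$. The boosting weight vector $w(x,z)\in\mathbb{R}^M$ at the current predictor $f=f_{t-1}$ is $w_k(x,z)=-e^{-\frac12[f_z(x)-f_k(x)]}$ for $k\ne z$ and $w_z(x,z)=\sum_{j\ne z}e^{-\frac12[f_z(x)-f_j(x)]}$. Predictors and functional gradients are regarded as elements of a real inner product space with norm $\|\cdot\|$. For each sample $i$, $g_t^i$ denotes the functional (directional) gradient of the $i$-th loss term $L(z_i,\cdot)$ at $f_{t-1}$, and the full functional gradient is $g_t=\frac1n\sum_{i=1}^n g_t^i$; as in the paper, the per-sample gradient is identified with the boosting weight up to a common positive scale, so $\|g_t^i\|=\beta\,\|w(x_i,z_i)\|$ for a fixed $\beta>0$. The importance-weighted estimate is unbiased: $\mathbb{E}_{P_t}[\bar g_t^{\mathcal{I}^t}]=g_t$. $\mathcal{F}^{t-1}$ denotes the history of the algorithm up to iteration $t-1$ (so $f_{t-1}$, the $w(x_i,z_i)$ and the $g_t^i$ are fixed given $\mathcal{F}^{t-1}$). *)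

theory Defs
  imports "HOL-Analysis.Analysis" "HOL-Library.FuncSet"
begin

definition mc_loss :: "'k::finite \<Rightarrow> real^'k \<Rightarrow> real" where
  "mc_loss zz u = (\<Sum>j\<in>UNIV - {zz}. exp ((u $ zz - u $ j) / 2))"

text \<open>Empirical risk of a predictor f, given as an element of the inner product space 'v
  together with its evaluation map ev.  Samples are indexed 0..n-1.\<close>
definition mc_risk :: "('v \<Rightarrow> 'a \<Rightarrow> real^'k::finite) \<Rightarrow> nat \<Rightarrow> (nat \<Rightarrow> 'a) \<Rightarrow> (nat \<Rightarrow> 'k)
    \<Rightarrow> 'v \<Rightarrow> real" where
  "mc_risk ev n x z f = (1 / real n) * (\<Sum>i<n. mc_loss (z i) (ev f (x i)))"

definition bweight :: "'k::finite \<Rightarrow> real^'k \<Rightarrow> real^'k" where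
  "bweight zz u = (\<chi> k. if k = zz then (\<Sum>j\<in>UNIV - {zz}. exp (- (u $ zz - u $ j) / 2))
                         else - exp (- (u $ zz - u $ k) / 2))"

definition gbar :: "nat \<Rightarrow> nat \<Rightarrow> (nat \<Rightarrow> 'v::real_vector) \<Rightarrow> (nat \<Rightarrow> real) \<Rightarrow> (nat \<Rightarrow> nat) \<Rightarrow> 'v" where
  "gbar n m g P s = (1 / real m) *\<^sub>R (\<Sum>k<m. (1 / (real n * P (s k))) *\<^sub>R g (s k))"

text \<open>Expected progress E_P[Delta] = ||f0 - f*||^2 - E_P ||f0 + alpha gbar - f*||^2, where
  the expectation is over m i.i.d. draws from P on {0..n-1}, written out as a finite sum over
  all index sequences with their product probabilities.\<close>
definition exp_progress :: "nat \<Rightarrow> nat \<Rightarrow> (nat \<Rightarrow> 'v::real_inner) \<Rightarrow> real \<Rightarrow> 'v \<Rightarrow> 'v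
    \<Rightarrow> (nat \<Rightarrow> real) \<Rightarrow> real" where
  "exp_progress n m g alpha f0 fstar P =
     (norm (f0 - fstar))\<^sup>2 -
     (\<Sum>s\<in>PiE {..<m} (\<lambda>_. {..<n}).
        (\<Prod>k<m. P (s k)) * (norm (f0 + alpha *\<^sub>R gbar n m g P s - fstar))\<^sup>2)"

definition is_sampling_dist :: "nat \<Rightarrow> (nat \<Rightarrow> real) \<Rightarrow> bool" where
  "is_sampling_dist n P \<longleftrightarrow> (\<forall>i<n. P i > 0) \<and> (\<Sum>i<n. P i) = 1"

end

theory Submission
  imports Defs
begin

text \<open>Only the second moment of the importance-weighted estimate depends on the sampling
  distribution \<open>P\<close>: its mean is the full gradient for every \<open>P\<close>, and by independence of the
  \<open>m\<close> draws its second moment is \<open>1/m\<close> times \<open>\<Sum>i. \<parallel>g\<^sub>i\<parallel>\<^sup>2 / (n\<^sup>2 P\<^sub>i)\<close> plus a term free of \<open>P\<close>.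
  Minimising \<open>\<Sum>i. \<parallel>g\<^sub>i\<parallel>\<^sup>2 / P\<^sub>i\<close> over the simplex is Cauchy-Schwarz,
  \<open>(\<Sum>i. \<parallel>g\<^sub>i\<parallel>)\<^sup>2 \<le> \<Sum>i. \<parallel>g\<^sub>i\<parallel>\<^sup>2 / P\<^sub>i\<close>, with equality for \<open>P\<^sub>i\<close> proportional to
  \<open>\<parallel>g\<^sub>i\<parallel> = \<beta> \<parallel>w(x\<^sub>i, z\<^sub>i)\<parallel>\<close>. The optimal \<open>P\<close> does not depend on \<open>f\<^sup>*\<close>.\<close>

definition iid_expectation :: "'i set \<Rightarrow> 'a set \<Rightarrow> ('a \<Rightarrow> real) \<Rightarrow> (('i \<Rightarrow> 'a) \<Rightarrow> real) \<Rightarrow> real"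
  where "iid_expectation I A P X = (\<Sum>s\<in>PiE I (\<lambda>_. A). (\<Prod>k\<in>I. P (s k)) * X s)"

lemma iid_expectation_cong:
  "(\<And>s. s \<in> PiE I (\<lambda>_. A) \<Longrightarrow> X s = Y s) \<Longrightarrow> iid_expectation I A P X = iid_expectation I A P Y"
  unfolding iid_expectation_def by (intro sum.cong) auto

lemma iid_expectation_add:
  "iid_expectation I A P (\<lambda>s. X s + Y s) = iid_expectation I A P X + iid_expectation I A P Y"
  unfolding iid_expectation_def by (simp add: distrib_left sum.distrib)

lemma iid_expectation_cmult:
  "iid_expectation I A P (\<lambda>s. c * X s) = c * iid_expectation I A P X"
  unfolding iid_expectation_def by (simp add: sum_distrib_left mult.left_commute)

lemma iid_expectation_sum:
  "iid_expectation I A P (\<lambda>s. \<Sum>j\<in>J. X j s) = (\<Sum>j\<in>J. iid_expectation I A P (X j))"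
  unfolding iid_expectation_def by (simp add: sum_distrib_left sum.swap[of _ J])

lemma iid_expectation_prod:
  assumes "finite I" and "K \<subseteq> I" and "sum P A = 1"
  shows "iid_expectation I A P (\<lambda>s. \<Prod>k\<in>K. h k (s k)) = (\<Prod>k\<in>K. \<Sum>a\<in>A. P a * h k a)"
proof -
  have "finite A"
    using \<open>sum P A = 1\<close> sum.infinite by fastforce
  have restrict: "prod f K = (\<Prod>k\<in>I. if k \<in> K then f k else 1)" for f :: "'a \<Rightarrow> real"
    using prod.inter_restrict[OF \<open>finite I\<close>, of f K] \<open>K \<subseteq> I\<close> by (simp add: Int_absorb1)
  have "iid_expectation I A P (\<lambda>s. \<Prod>k\<in>K. h k (s k))
      = (\<Sum>s\<in>PiE I (\<lambda>_. A). \<Prod>k\<in>I. P (s k) * (if k \<in> K then h k (s k) else 1))"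
    by (simp only: iid_expectation_def restrict prod.distrib)
  also have "\<dots> = (\<Prod>k\<in>I. \<Sum>a\<in>A. P a * (if k \<in> K then h k a else 1))"
    by (rule prod_sum_PiE[symmetric]) (use \<open>finite I\<close> \<open>finite A\<close> in auto)
  also have "\<dots> = (\<Prod>k\<in>I. if k \<in> K then \<Sum>a\<in>A. P a * h k a else 1)"
    by (intro prod.cong) (simp_all add: \<open>sum P A = 1\<close>)
  also have "\<dots> = (\<Prod>k\<in>K. \<Sum>a\<in>A. P a * h k a)"
    by (rule restrict[symmetric])
  finally show ?thesis .
qed

lemma iid_expectation_const:
  assumes "finite I" and "sum P A = 1"
  shows "iid_expectation I A P (\<lambda>_. c) = c"
  using iid_expectation_prod[OF assms(1) empty_subsetI assms(2)] iid_expectation_cmult[of I A P c "\<lambda>_. 1"]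
  by simp

lemma iid_expectation_coordinate:
  assumes "finite I" and "k \<in> I" and "sum P A = 1"
  shows "iid_expectation I A P (\<lambda>s. h (s k)) = (\<Sum>a\<in>A. P a * h a)"
  using iid_expectation_prod[of I "{k}" P A "\<lambda>_. h"] assms by simp

lemma iid_expectation_two_coordinates:
  fixes k l :: 'i and f :: "'a \<Rightarrow> 'a \<Rightarrow> real"
  assumes "finite I" and "k \<in> I" and "l \<in> I" and "k \<noteq> l" and "sum P A = 1"
  shows "iid_expectation I A P (\<lambda>s. f (s k) (s l)) = (\<Sum>a\<in>A. \<Sum>b\<in>A. P a * P b * f a b)"
proof -
  have "finite A"
    using \<open>sum P A = 1\<close> sum.infinite by fastforce
  define H where "H a b j x = (of_bool (x = (if j = k then a else b)) :: real)"
    for a b :: 'a and j :: 'i and x :: 'a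
  have indicators: "f (s k) (s l) = (\<Sum>a\<in>A. \<Sum>b\<in>A. f a b * (\<Prod>j\<in>{k, l}. H a b j (s j)))"
    if "s \<in> PiE I (\<lambda>_. A)" for s
  proof -
    have "s k \<in> A" "s l \<in> A"
      using that \<open>k \<in> I\<close> \<open>l \<in> I\<close> by auto
    then show ?thesis
      using \<open>k \<noteq> l\<close> \<open>finite A\<close>
      by (simp add: H_def of_bool_def if_distrib[of "\<lambda>x. _ * x"] cong: if_cong)
  qed
  have "iid_expectation I A P (\<lambda>s. f (s k) (s l))
      = iid_expectation I A P (\<lambda>s. \<Sum>a\<in>A. \<Sum>b\<in>A. f a b * (\<Prod>j\<in>{k, l}. H a b j (s j)))"
    by (rule iid_expectation_cong) (rule indicators)
  also have "\<dots> = (\<Sum>a\<in>A. \<Sum>b\<in>A. f a b * iid_expectation I A P (\<lambda>s. \<Prod>j\<in>{k, l}. H a b j (s j)))"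
    by (simp only: iid_expectation_sum iid_expectation_cmult)
  also have "\<dots> = (\<Sum>a\<in>A. \<Sum>b\<in>A. P a * P b * f a b)"
  proof (intro sum.cong refl)
    fix a b
    assume "a \<in> A" "b \<in> A"
    have "iid_expectation I A P (\<lambda>s. \<Prod>j\<in>{k, l}. H a b j (s j))
        = (\<Prod>j\<in>{k, l}. \<Sum>x\<in>A. P x * H a b j x)"
      using assms by (intro iid_expectation_prod) auto
    also have "\<dots> = P a * P b"
      using \<open>k \<noteq> l\<close> \<open>a \<in> A\<close> \<open>b \<in> A\<close> \<open>finite A\<close>
      by (simp add: H_def of_bool_def if_distrib[of "\<lambda>x. _ * x"] cong: if_cong)
    finally show "f a b * iid_expectation I A P (\<lambda>s. \<Prod>j\<in>{k, l}. H a b j (s j))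
        = P a * P b * f a b"
      by simp
  qed
  finally show ?thesis .
qed

lemma sum_if_diagonal:
  assumes "finite I"
  shows "(\<Sum>k\<in>I. \<Sum>l\<in>I. if k = l then D else B)
    = real (card I) * D + real (card I) * (real (card I) - 1) * (B :: real)"
proof -
  have "(\<Sum>l\<in>I. if k = l then D else B) = D + (real (card I) - 1) * B" if "k \<in> I" for k
  proof -
    have "(\<Sum>l\<in>I. if k = l then D else B) = (\<Sum>l\<in>I. B + (if k = l then D - B else 0))"
      by (intro sum.cong) auto
    also have "\<dots> = real (card I) * B + (D - B)"
      using that assms by (simp add: sum.distrib)
    finally show ?thesis by (simp add: algebra_simps)
  qed
  then have "(\<Sum>k\<in>I. \<Sum>l\<in>I. if k = l then D else B) = (\<Sum>k\<in>I. D + (real (card I) - 1) * B)"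
    by (intro sum.cong) auto
  then show ?thesis
    by (simp add: algebra_simps)
qed

lemma iid_expectation_norm_shifted_sum:
  fixes c :: "'v::real_inner" and Y :: "'a \<Rightarrow> 'v"
  assumes "finite I" and "sum P A = 1"
  defines "\<mu> \<equiv> \<Sum>a\<in>A. P a *\<^sub>R Y a"
  shows "iid_expectation I A P (\<lambda>s. (norm (c + (\<Sum>k\<in>I. Y (s k))))\<^sup>2)
    = (norm c)\<^sup>2 + 2 * real (card I) * inner c \<mu> + real (card I) * (\<Sum>a\<in>A. P a * (norm (Y a))\<^sup>2)
      + real (card I) * (real (card I) - 1) * (norm \<mu>)\<^sup>2"
proof -
  have expand: "(norm (c + (\<Sum>k\<in>I. Y (s k))))\<^sup>2
      = (norm c)\<^sup>2 + 2 * (\<Sum>k\<in>I. inner c (Y (s k))) + (\<Sum>k\<in>I. \<Sum>l\<in>I. inner (Y (s k)) (Y (s l)))"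
    for s
  proof -
    define V where "V = (\<Sum>k\<in>I. Y (s k))"
    have "(norm (c + V))\<^sup>2 = (norm c)\<^sup>2 + 2 * inner c V + inner V V"
      by (simp add: power2_norm_eq_inner inner_add_left inner_add_right inner_commute[of V c])
    then show ?thesis
      by (simp add: V_def inner_sum_left inner_sum_right) (rule sum.swap)
  qed
  have mean: "iid_expectation I A P (\<lambda>s. inner c (Y (s k))) = inner c \<mu>" if "k \<in> I" for k
    using iid_expectation_coordinate[OF \<open>finite I\<close> that \<open>sum P A = 1\<close>]
    by (simp add: \<mu>_def inner_sum_right)
  have second: "iid_expectation I A P (\<lambda>s. inner (Y (s k)) (Y (s l)))
      = (if k = l then \<Sum>a\<in>A. P a * (norm (Y a))\<^sup>2 else (norm \<mu>)\<^sup>2)"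
    if "k \<in> I" "l \<in> I" for k l
  proof (cases "k = l")
    case True
    then show ?thesis
      using iid_expectation_coordinate[OF \<open>finite I\<close> that(1) \<open>sum P A = 1\<close>]
      by (simp add: power2_norm_eq_inner)
  next
    case False
    have "(norm \<mu>)\<^sup>2 = (\<Sum>a\<in>A. \<Sum>b\<in>A. P a * P b * inner (Y a) (Y b))"
      unfolding \<mu>_def power2_norm_eq_inner inner_sum_left inner_sum_right
      by (simp add: mult.assoc mult.left_commute inner_commute)
    with False show ?thesis
      using iid_expectation_two_coordinates[OF \<open>finite I\<close> that False \<open>sum P A = 1\<close>] by simp
  qed
  show ?thesis
    unfolding expand iid_expectation_add iid_expectation_cmult iid_expectation_sum
    using assms(1,2)
    by (simp add: iid_expectation_const mean second sum_if_diagonal cong: sum.cong)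
qed

lemma exp_progress_eq:
  fixes g :: "nat \<Rightarrow> 'v::real_inner"
  assumes "is_sampling_dist n P" and "m \<ge> 1"
  shows "exp_progress n m g alpha f0 fstar P
    = - 2 * alpha / real n * inner (f0 - fstar) (\<Sum>i<n. g i)
      - (1 - 1 / real m) * (alpha / real n)\<^sup>2 * (norm (\<Sum>i<n. g i))\<^sup>2
      - alpha\<^sup>2 / (real m * (real n)\<^sup>2) * (\<Sum>i<n. (norm (g i))\<^sup>2 / P i)"
proof -
  have P_pos: "\<And>i. i < n \<Longrightarrow> P i > 0" and sum_P: "sum P {..<n} = 1"
    using assms(1) by (auto simp: is_sampling_dist_def)
  have "real m > 0" "real n > 0"
    using \<open>m \<ge> 1\<close> sum_P by (auto intro: Nat.gr0I)
  have P_nonzero: "\<And>i. i < n \<Longrightarrow> P i \<noteq> 0"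
    using P_pos by fastforce
  define Y where "Y i = (alpha / (real m * real n * P i)) *\<^sub>R g i" for i
  have shifted: "f0 + alpha *\<^sub>R gbar n m g P s - fstar = (f0 - fstar) + (\<Sum>k<m. Y (s k))" for s
    by (simp add: gbar_def Y_def scaleR_sum_right mult.assoc)
  have "(\<Sum>i<n. P i *\<^sub>R Y i) = (\<Sum>i<n. (alpha / (real m * real n)) *\<^sub>R g i)"
    by (intro sum.cong) (auto simp: Y_def P_nonzero)
  then have mean: "(\<Sum>i<n. P i *\<^sub>R Y i) = (alpha / (real m * real n)) *\<^sub>R (\<Sum>i<n. g i)"
    by (simp add: scaleR_sum_right)
  have "(\<Sum>i<n. P i * (norm (Y i))\<^sup>2)
      = (\<Sum>i<n. alpha\<^sup>2 / (real m * real n)\<^sup>2 * ((norm (g i))\<^sup>2 / P i))"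
    by (intro sum.cong refl) (simp add: Y_def P_nonzero power2_eq_square field_simps)
  then have variance: "(\<Sum>i<n. P i * (norm (Y i))\<^sup>2)
      = alpha\<^sup>2 / (real m * real n)\<^sup>2 * (\<Sum>i<n. (norm (g i))\<^sup>2 / P i)"
    by (simp add: sum_distrib_left)
  have "exp_progress n m g alpha f0 fstar P
      = (norm (f0 - fstar))\<^sup>2
        - iid_expectation {..<m} {..<n} P (\<lambda>s. (norm ((f0 - fstar) + (\<Sum>k<m. Y (s k))))\<^sup>2)"
    unfolding exp_progress_def iid_expectation_def shifted ..
  also have "\<dots> = - 2 * real m * inner (f0 - fstar) (\<Sum>i<n. P i *\<^sub>R Y i)
      - real m * (\<Sum>i<n. P i * (norm (Y i))\<^sup>2)
      - real m * (real m - 1) * (norm (\<Sum>i<n. P i *\<^sub>R Y i))\<^sup>2"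
    using iid_expectation_norm_shifted_sum[of "{..<m}" P "{..<n}" "f0 - fstar" Y] sum_P by simp
  also have "\<dots> = - 2 * alpha / real n * inner (f0 - fstar) (\<Sum>i<n. g i)
      - (1 - 1 / real m) * (alpha / real n)\<^sup>2 * (norm (\<Sum>i<n. g i))\<^sup>2
      - alpha\<^sup>2 / (real m * (real n)\<^sup>2) * (\<Sum>i<n. (norm (g i))\<^sup>2 / P i)"
    unfolding mean variance using \<open>real m > 0\<close> \<open>real n > 0\<close>
    by (simp add: power_mult_distrib) (simp add: field_simps power2_eq_square)
  finally show ?thesis .
qed

lemma sum_square_le_sum_square_div:
  fixes G P :: "'a \<Rightarrow> real"
  assumes "\<And>a. a \<in> A \<Longrightarrow> P a > 0" and "sum P A = 1"
  shows "(sum G A)\<^sup>2 \<le> (\<Sum>a\<in>A. (G a)\<^sup>2 / P a)"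
proof -
  define c where "c = sum G A"
  have "2 * c * G a - c\<^sup>2 * P a \<le> (G a)\<^sup>2 / P a" if "a \<in> A" for a
  proof -
    have "0 \<le> (G a - c * P a)\<^sup>2 / P a"
      using assms(1)[OF that] by simp
    also have "\<dots> = (G a)\<^sup>2 / P a - 2 * c * G a + c\<^sup>2 * P a"
      using assms(1)[OF that] by (simp add: field_simps power2_eq_square)
    finally show ?thesis by simp
  qed
  then have "(\<Sum>a\<in>A. 2 * c * G a - c\<^sup>2 * P a) \<le> (\<Sum>a\<in>A. (G a)\<^sup>2 / P a)"
    by (rule sum_mono)
  moreover have "(\<Sum>a\<in>A. 2 * c * G a - c\<^sup>2 * P a) = c\<^sup>2"
    by (simp add: sum_subtractf sum_distrib_left[symmetric] \<open>sum P A = 1\<close> c_def power2_eq_square)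
  ultimately show ?thesis
    by (simp add: c_def)
qed

lemma sum_square_div_proportional:
  fixes G :: "'a \<Rightarrow> real"
  shows "(\<Sum>a\<in>A. (G a)\<^sup>2 / (G a / sum G A)) = (sum G A)\<^sup>2"
proof -
  have "(G a)\<^sup>2 / (G a / sum G A) = G a * sum G A" for a
    by (cases "G a = 0 \<or> sum G A = 0") (auto simp: power2_eq_square)
  then show ?thesis
    by (simp add: sum_distrib_right[symmetric] power2_eq_square)
qed

lemma is_sampling_dist_normalize:
  assumes "n \<ge> 1" and "\<And>i. i < n \<Longrightarrow> W i > 0"
  shows "is_sampling_dist n (\<lambda>i. W i / (\<Sum>j<n. W j))"
proof -
  have "(\<Sum>j<n. W j) > 0"
    using assms by (intro sum_pos) (auto simp: lessThan_empty_iff)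
  then show ?thesis
    using assms(2) by (simp add: is_sampling_dist_def sum_divide_distrib[symmetric])
qed

lemma norm_bweight_pos:
  assumes "CARD('k::finite) \<ge> 2"
  shows "0 < norm (bweight (zz :: 'k) u)"
proof -
  have "UNIV - {zz} \<noteq> {}"
  proof
    assume "UNIV - {zz} = {}"
    then have "CARD('k) = card {zz}"
      by (metis Diff_eq_empty_iff subset_singletonD UNIV_not_empty)
    with assms show False
      by simp
  qed
  then have "0 < bweight zz u $ zz"
    by (simp add: bweight_def sum_pos)
  also have "\<dots> \<le> norm (bweight zz u)"
    by (rule order_trans[OF abs_ge_self component_le_norm_cart])
  finally show ?thesis .
qed

theorem theorem1:
  fixes ev :: "'v::real_inner \<Rightarrow> 'a \<Rightarrow> real^'k::finite"
    and x :: "nat \<Rightarrow> 'a" and z :: "nat \<Rightarrow> 'k"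
    and n m :: nat and f0 fstar :: 'v and g :: "nat \<Rightarrow> 'v"
    and beta alpha :: real
  assumes M2: "CARD('k) \<ge> 2"
    and n1: "n \<ge> 1" and m1: "m \<ge> 1"
    and ev_add: "\<And>f h a. ev (f + h) a = ev f a + ev h a"
    and ev_scale: "\<And>c f a. ev (c *\<^sub>R f) a = c *\<^sub>R ev f a"
    and fstar_min: "\<And>f. mc_risk ev n x z fstar \<le> mc_risk ev n x z f"
    and beta_pos: "beta > 0"
    and g_norm: "\<And>i. i < n \<Longrightarrow> norm (g i) = beta * norm (bweight (z i) (ev f0 (x i)))"
  shows "is_sampling_dist n (\<lambda>i. norm (bweight (z i) (ev f0 (x i))) /
                                 (\<Sum>j<n. norm (bweight (z j) (ev f0 (x j)))))
       \<and> (\<forall>P. is_sampling_dist n P \<longrightarrow>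
            exp_progress n m g alpha f0 fstar P
              \<le> exp_progress n m g alpha f0 fstar
                   (\<lambda>i. norm (bweight (z i) (ev f0 (x i))) /
                        (\<Sum>j<n. norm (bweight (z j) (ev f0 (x j))))))"
proof -
  define W where "W i = norm (bweight (z i) (ev f0 (x i)))" for i
  define Q where "Q i = W i / (\<Sum>j<n. W j)" for i
  define G where "G i = norm (g i)" for i
  have Q_dist: "is_sampling_dist n Q"
    unfolding Q_def W_def using n1 norm_bweight_pos[OF M2] by (rule is_sampling_dist_normalize)
  have "Q i = G i / sum G {..<n}" if "i < n" for i
    using that beta_pos by (simp add: Q_def G_def W_def g_norm sum_distrib_left[symmetric])
  then have "(\<Sum>i<n. (G i)\<^sup>2 / Q i) = (\<Sum>i<n. (G i)\<^sup>2 / (G i / sum G {..<n}))"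
    by (intro sum.cong) simp_all
  then have Q_optimal: "(\<Sum>i<n. (G i)\<^sup>2 / Q i) = (sum G {..<n})\<^sup>2"
    by (simp only: sum_square_div_proportional)
  have Q_maximal: "exp_progress n m g alpha f0 fstar P \<le> exp_progress n m g alpha f0 fstar Q"
    if "is_sampling_dist n P" for P
  proof -
    have "(\<Sum>i<n. (G i)\<^sup>2 / Q i) \<le> (\<Sum>i<n. (G i)\<^sup>2 / P i)"
      unfolding Q_optimal using that
      by (intro sum_square_le_sum_square_div) (auto simp: is_sampling_dist_def)
    then show ?thesis
      unfolding exp_progress_eq[OF that m1] exp_progress_eq[OF Q_dist m1] G_def
      by (intro diff_left_mono mult_left_mono) auto
  qed
  with Q_dist show ?thesis
    unfolding Q_def W_def by blast
qed

end
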